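(* Let $\langle X,d\rangle$ be a metric space. Then the family of real-valued strongly uniformly locally Lipschitz functions on $X$ is closed under pointwise multiplication if and only if $X$ is strongly uniformly locally bounded.
   Context: For $\varepsilon>0$, an $\varepsilon$-chain joining $x,y\in X$ is a finite sequence $x=x_0,\dots,x_n=y$ with $d(x_{i-1},x_i)<\varepsilon$; $S^\infty_d(x,\varepsilon)$ is the set of points joinable to $x$ by an $\varepsilon$-chain. $X$ is strongly uniformly locally bounded if there is $\delta>0$ such that $S^\infty_d(x,\delta)$ is bounded for every $x\in X$. A function $f:X\to\mathbb{R}$ is strongly uniformly locally Lipschitz if there is $\delta>0$ such that for every $x\in X$ the restriction of $f$ to $S^\infty_d(x,\delta)$ is Lipschitz (constant may depend on $x$). *)

theory Defs
  imports "HOL-Analysis.Analysis"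
begin

text \<open>The metric space X is the whole carrier of a type of class metric_space, with d = dist.\<close>

definition eps_chain :: "real \<Rightarrow> 'a::metric_space \<Rightarrow> 'a \<Rightarrow> bool" where
  "eps_chain e x y \<longleftrightarrow>
     (\<exists>(n::nat) (p::nat \<Rightarrow> 'a). p 0 = x \<and> p n = y \<and> (\<forall>i<n. dist (p i) (p (Suc i)) < e))"

definition chain_set :: "'a::metric_space \<Rightarrow> real \<Rightarrow> 'a set" where
  "chain_set x e = {y. eps_chain e x y}"

definition strongly_uniformly_locally_bounded :: "'a::metric_space itself \<Rightarrow> bool" where
  "strongly_uniformly_locally_bounded _ \<longleftrightarrow>
     (\<exists>\<delta>>0. \<forall>x::'a. bounded (chain_set x \<delta>))"

definition strongly_uniformly_locally_lipschitz :: "('a::metric_space \<Rightarrow> real) \<Rightarrow> bool" where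
  "strongly_uniformly_locally_lipschitz f \<longleftrightarrow>
     (\<exists>\<delta>>0. \<forall>x. \<exists>C. C-lipschitz_on (chain_set x \<delta>) f)"

end

theory Submission
  imports Defs
begin

text \<open>If X is strongly uniformly locally bounded, then for small \<delta> every chain set
  S(x, \<delta>) is bounded, so Lipschitz functions on it are bounded there, and the product of
  bounded Lipschitz functions is Lipschitz. Conversely, the distance to a fixed point a is
  1-Lipschitz everywhere; if its square is Lipschitz with constant C on S(x, \<delta>), then
  factoring d(y,a)^2 - d(x,a)^2 and using d(x,y) \<le> d(y,a) + d(x,a) gives
  d(y,a) \<le> d(x,a) + C on that set.\<close>

lemma eps_chain_mono:
  assumes "eps_chain e x y" and "e \<le> e'"
  shows "eps_chain e' x y"
proof -
  obtain n p where "p 0 = x" "p n = y" and steps: "\<forall>i<n. dist (p i) (p (Suc i)) < e"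
    using assms(1) unfolding eps_chain_def by blast
  moreover have "\<forall>i<n. dist (p i) (p (Suc i)) < e'"
    using steps assms(2) by (meson less_le_trans)
  ultimately show ?thesis
    unfolding eps_chain_def by blast
qed

lemma chain_set_mono: "e \<le> e' \<Longrightarrow> chain_set x e \<subseteq> chain_set x e'"
  unfolding chain_set_def using eps_chain_mono by blast

lemma lipschitz_on_dist: "1-lipschitz_on S (\<lambda>y. dist y a)"
proof (rule lipschitz_onI)
  fix x y
  show "dist (dist x a) (dist y a) \<le> 1 * dist x y"
    using abs_dist_diff_le[of x a y] by (simp add: dist_real_def dist_commute)
qed simp

lemma lipschitz_on_bounded_image:
  fixes f :: "'a::metric_space \<Rightarrow> 'b::metric_space"
  assumes lip: "C-lipschitz_on S f" and "bounded S"
  shows "bounded (f ` S)"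
proof (cases "S = {}")
  case False
  then obtain x where x: "x \<in> S" by blast
  obtain e where e: "\<forall>y\<in>S. dist x y \<le> e"
    using \<open>bounded S\<close> bounded_any_center by blast
  have "dist (f x) (f y) \<le> C * e" if "y \<in> S" for y
  proof -
    have "dist (f x) (f y) \<le> C * dist x y" using lipschitz_onD[OF lip x that] .
    also have "\<dots> \<le> C * e"
      using e that lipschitz_on_nonneg[OF lip] by (simp add: mult_left_mono)
    finally show ?thesis .
  qed
  then show ?thesis unfolding bounded_def by blast
qed simp

lemma lipschitz_on_mult:
  fixes f g :: "'a::metric_space \<Rightarrow> 'b::real_normed_algebra"
  assumes lip_f: "C-lipschitz_on S f" and lip_g: "D-lipschitz_on S g"
    and bound_f: "\<And>y. y \<in> S \<Longrightarrow> norm (f y) \<le> M" and "M \<ge> 0"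
    and bound_g: "\<And>y. y \<in> S \<Longrightarrow> norm (g y) \<le> N" and "N \<ge> 0"
  shows "(M * D + N * C)-lipschitz_on S (\<lambda>x. f x * g x)"
proof (rule lipschitz_onI)
  have "C \<ge> 0" "D \<ge> 0" using lip_f lip_g lipschitz_on_nonneg by blast+
  note nonneg = this \<open>M \<ge> 0\<close> \<open>N \<ge> 0\<close>
  then show "0 \<le> M * D + N * C" by simp
  fix a b assume a: "a \<in> S" and b: "b \<in> S"
  have "f a * g a - f b * g b = f a * (g a - g b) + (f a - f b) * g b"
    by (simp add: algebra_simps)
  then have "dist (f a * g a) (f b * g b) \<le> norm (f a) * norm (g a - g b) + norm (f a - f b) * norm (g b)"
    by (metis dist_norm norm_mult_ineq norm_triangle_le add_mono)
  also have "\<dots> \<le> M * (D * dist a b) + (C * dist a b) * N"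
    using lipschitz_onD[OF lip_f a b] lipschitz_onD[OF lip_g a b]
      bound_f[OF a] bound_g[OF b] nonneg
    by (intro add_mono mult_mono) (auto simp: norm_minus_commute dist_norm)
  finally show "dist (f a * g a) (f b * g b) \<le> (M * D + N * C) * dist a b"
    by (simp add: algebra_simps)
qed

lemma bounded_if_lipschitz_on_dist_square:
  assumes lip: "C-lipschitz_on S (\<lambda>y. dist y a * dist y a)"
  shows "bounded S"
proof (cases "S = {}")
  case False
  then obtain x where x: "x \<in> S" by blast
  have "dist y a \<le> dist x a + C" if y: "y \<in> S" for y
  proof -
    have "(dist y a - dist x a) * (dist y a + dist x a) = dist y a * dist y a - dist x a * dist x a"
      by (simp add: algebra_simps)
    also have "\<dots> \<le> C * dist y x"
      using lipschitz_onD[OF lip y x] by (simp add: dist_real_def)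
    also have "\<dots> \<le> C * (dist y a + dist x a)"
      using dist_triangle3[of y x a] lipschitz_on_nonneg[OF lip]
      by (simp add: mult_left_mono dist_commute)
    finally have "(dist y a - dist x a) * (dist y a + dist x a) \<le> C * (dist y a + dist x a)" .
    then show ?thesis
      using lipschitz_on_nonneg[OF lip] zero_le_dist[of y a] zero_le_dist[of x a]
      by (cases "dist y a + dist x a = 0") (simp_all add: mult_le_cancel_right add_nonneg_eq_0_iff)
  qed
  then show ?thesis
    unfolding bounded_any_center[of _ a] by (metis dist_commute)
qed simp

lemma strongly_uniformly_locally_lipschitz_dist:
  "strongly_uniformly_locally_lipschitz (\<lambda>y. dist y a)"
  unfolding strongly_uniformly_locally_lipschitz_def
  using lipschitz_on_dist zero_less_one by blast

lemma strongly_uniformly_locally_bounded_if_lipschitz_dist_square: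
  assumes "strongly_uniformly_locally_lipschitz (\<lambda>y::'a::metric_space. dist y a * dist y a)"
  shows "strongly_uniformly_locally_bounded TYPE('a)"
  using assms bounded_if_lipschitz_on_dist_square
  unfolding strongly_uniformly_locally_lipschitz_def strongly_uniformly_locally_bounded_def
  by blast

lemma strongly_uniformly_locally_lipschitz_mult:
  fixes f g :: "'a::metric_space \<Rightarrow> real"
  assumes "strongly_uniformly_locally_bounded TYPE('a)"
    and "strongly_uniformly_locally_lipschitz f" and "strongly_uniformly_locally_lipschitz g"
  shows "strongly_uniformly_locally_lipschitz (\<lambda>x. f x * g x)"
proof -
  obtain \<delta>0 \<delta>1 \<delta>2 where "\<delta>0 > 0" "\<delta>1 > 0" "\<delta>2 > 0"
    and bnd: "\<And>x::'a. bounded (chain_set x \<delta>0)"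
    and lip_f: "\<And>x. \<exists>C. C-lipschitz_on (chain_set x \<delta>1) f"
    and lip_g: "\<And>x. \<exists>D. D-lipschitz_on (chain_set x \<delta>2) g"
    using assms unfolding strongly_uniformly_locally_bounded_def
      strongly_uniformly_locally_lipschitz_def by metis
  define \<delta> where "\<delta> = min \<delta>0 (min \<delta>1 \<delta>2)"
  have "\<exists>L. L-lipschitz_on (chain_set x \<delta>) (\<lambda>x. f x * g x)" for x
  proof -
    let ?S = "chain_set x \<delta>"
    have "?S \<subseteq> chain_set x \<delta>0" "?S \<subseteq> chain_set x \<delta>1" "?S \<subseteq> chain_set x \<delta>2"
      by (simp_all add: chain_set_mono \<delta>_def)
    then obtain C D where C: "C-lipschitz_on ?S f" and D: "D-lipschitz_on ?S g"
      and "bounded ?S"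
      using lip_f lip_g bnd lipschitz_on_subset bounded_subset by metis
    obtain M N where "M > 0" "\<forall>y\<in>f ` ?S. norm y \<le> M" "N > 0" "\<forall>y\<in>g ` ?S. norm y \<le> N"
      using lipschitz_on_bounded_image[OF C \<open>bounded ?S\<close>]
        lipschitz_on_bounded_image[OF D \<open>bounded ?S\<close>] bounded_pos by metis
    then show ?thesis
      using lipschitz_on_mult[OF C D, of M N] by force
  qed
  moreover have "\<delta> > 0" using \<open>\<delta>0 > 0\<close> \<open>\<delta>1 > 0\<close> \<open>\<delta>2 > 0\<close> by (simp add: \<delta>_def)
  ultimately show ?thesis unfolding strongly_uniformly_locally_lipschitz_def by blast
qed

theorem mainTheorem5:
  shows "(\<forall>f g :: 'a::metric_space \<Rightarrow> real.
            strongly_uniformly_locally_lipschitz f \<and> strongly_uniformly_locally_lipschitz g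
            \<longrightarrow> strongly_uniformly_locally_lipschitz (\<lambda>x. f x * g x))
         \<longleftrightarrow> strongly_uniformly_locally_bounded TYPE('a)"
proof
  assume "\<forall>f g :: 'a \<Rightarrow> real.
            strongly_uniformly_locally_lipschitz f \<and> strongly_uniformly_locally_lipschitz g
            \<longrightarrow> strongly_uniformly_locally_lipschitz (\<lambda>x. f x * g x)"
  then have "strongly_uniformly_locally_lipschitz (\<lambda>y::'a. dist y undefined * dist y undefined)"
    using strongly_uniformly_locally_lipschitz_dist by blast
  then show "strongly_uniformly_locally_bounded TYPE('a)"
    by (rule strongly_uniformly_locally_bounded_if_lipschitz_dist_square)
qed (use strongly_uniformly_locally_lipschitz_mult in blast)

end
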